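(* Let $\mathbf m\in\mathbb C^d$ with $\operatorname{supp}(\mathbf m)\subseteq[\delta]_0$, where $2\delta-1\le d$, so that $\mathbf m=(a_0e^{i\theta_0},\dots,a_{\delta-1}e^{i\theta_{\delta-1}},0,\dots,0)^T$ with $a_j,\theta_j\in\mathbb R$. Let $1\le\gamma\le2\delta-1$ and $$\mu_2=\min_{|p|\le\gamma-1,\ |q|\le\delta-1}\left|\left(F_d(\widehat{\mathbf m}\circ S_p\overline{\widehat{\mathbf m}})\right)_q\right|.$$ If $|a_0|>(\delta-1)|a_1|$ and $|a_1|\ge|a_2|\ge\cdots\ge|a_{\delta-1}|>0$, then $\mu_2>0$.
   Context: Vectors in $\mathbb C^d$ are indexed by $[d]_0=\{0,1,\dots,d-1\}$, with all indices interpreted modulo $d$. $F_d$ is the DFT matrix $(F_d)_{j,k}=e^{-2\pi i jk/d}$ and $\widehat{\mathbf m}=F_d\mathbf m$. The shift is $(S_p\mathbf x)_n=x_{n+p}$; $\circ$ is the entrywise product and $\overline{\mathbf x}$ the entrywise conjugate; $\operatorname{supp}(\mathbf x)=\{n:x_n\neq0\}$. *)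

theory Defs
  imports Complex_Main
begin

text \<open>Vectors in C^d are represented as functions nat => complex; only the
entries at indices 0..d-1 matter. Integer indices are reduced modulo d.\<close>

definition vidx :: "nat \<Rightarrow> (nat \<Rightarrow> complex) \<Rightarrow> int \<Rightarrow> complex" where
  "vidx d x n = x (nat (n mod int d))"

definition dft :: "nat \<Rightarrow> (nat \<Rightarrow> complex) \<Rightarrow> (nat \<Rightarrow> complex)" where
  "dft d x = (\<lambda>k. \<Sum>j<d. x j * exp (- 2 * pi * \<i> * of_nat j * of_nat k / of_nat d))"

definition shift :: "nat \<Rightarrow> int \<Rightarrow> (nat \<Rightarrow> complex) \<Rightarrow> (nat \<Rightarrow> complex)" where
  "shift d p x = (\<lambda>n. vidx d x (int n + p))"

definition hadamard :: "(nat \<Rightarrow> complex) \<Rightarrow> (nat \<Rightarrow> complex) \<Rightarrow> (nat \<Rightarrow> complex)" where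
  "hadamard x y = (\<lambda>n. x n * y n)"

definition vconj :: "(nat \<Rightarrow> complex) \<Rightarrow> (nat \<Rightarrow> complex)" where
  "vconj x = (\<lambda>n. cnj (x n))"

definition supp :: "nat \<Rightarrow> (nat \<Rightarrow> complex) \<Rightarrow> nat set" where
  "supp d x = {n. n < d \<and> x n \<noteq> 0}"

definition mu2 :: "nat \<Rightarrow> nat \<Rightarrow> nat \<Rightarrow> (nat \<Rightarrow> complex) \<Rightarrow> real" where
  "mu2 d \<gamma> \<delta> m = Min ((\<lambda>(p, q). cmod (vidx d (dft d (hadamard (dft d m) (shift d p (vconj (dft d m))))) q))
      ` {(p, q). \<bar>p\<bar> \<le> int \<gamma> - 1 \<and> \<bar>q\<bar> \<le> int \<delta> - 1})"

end

theory Submission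
  imports Defs "HOL-Analysis.Analysis"
begin

text \<open>Let \<open>\<omega> = exp (-2\<pi>i/d)\<close>. By orthogonality of the characters \<open>k \<mapsto> \<omega>^(k n)\<close>, the
\<open>q\<close>-th entry of \<open>F_d (F_d m \<circ> S_p (conj (F_d m)))\<close> is \<open>d\<close> times the sum of \<open>m_j conj (m_l) \<omega>^(-l p)\<close>
over all \<open>l \<equiv> j + q (mod d)\<close>. As \<open>m\<close> is supported on \<open>[0, \<delta>)\<close> and \<open>2\<delta> - 1 \<le> d\<close>, only \<open>l = j + q\<close>
contributes, which leaves \<open>d\<close> times a twisted autocorrelation of \<open>m\<close> at lag \<open>q\<close>. Exactly one of its
terms involves \<open>m_0\<close>; it has modulus \<open>|a_0| |a_r|\<close> with \<open>r = |q|\<close>, whereas each of the at most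
\<open>\<delta> - 1\<close> other terms has modulus at most \<open>|a_1| |a_r|\<close> by monotonicity. So the dominant term cannot
be cancelled.\<close>

definition omega :: "nat \<Rightarrow> int \<Rightarrow> complex" where
  "omega d n = exp (- 2 * pi * \<i> * of_int n / of_nat d)"

lemma omega_add: "omega d (a + b) = omega d a * omega d b"
  unfolding omega_def by (simp add: exp_add[symmetric] algebra_simps add_divide_distrib diff_divide_distrib)

lemma omega_uminus: "omega d (- n) = cnj (omega d n)"
  unfolding omega_def by (simp add: exp_cnj)

lemma norm_omega [simp]: "norm (omega d n) = 1"
proof -
  have "omega d n = exp (\<i> * complex_of_real (- 2 * pi * of_int n / of_nat d))"
    unfolding omega_def by (simp add: field_simps)
  then show ?thesis by simp
qed

lemma omega_int_mult: "omega d (int k * n) = omega d n ^ k"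
proof (induction k)
  case (Suc k)
  have "int (Suc k) * n = n + int k * n" by (simp add: algebra_simps)
  then show ?case using Suc by (simp add: omega_add)
qed (simp add: omega_def)

lemma omega_mult_self: "omega d (int d * k) = 1"
proof (cases "d = 0")
  case False
  then have "omega d (int d * k) = exp ((2 * of_int (- k) * pi) * \<i>)"
    unfolding omega_def by (simp add: field_simps)
  also have "\<dots> = 1" by (rule exp_integer_2pi) simp
  finally show ?thesis .
qed (simp add: omega_def)

lemma omega_cong:
  assumes "int d dvd a - b"
  shows "omega d a = omega d b"
proof -
  obtain c where "a - b = int d * c" using assms by (rule dvdE)
  then have "a = b + int d * c" by simp
  then show ?thesis by (simp add: omega_add omega_mult_self)
qed

lemma omega_eq_1_iff:
  assumes "d > 0"
  shows "omega d n = 1 \<longleftrightarrow> int d dvd n"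
proof
  assume "omega d n = 1"
  then obtain k :: int where "Im (- 2 * pi * \<i> * of_int n / of_nat d) = of_int (2 * k) * pi"
    unfolding omega_def exp_eq_1 by blast
  then have "- 2 * pi * of_int n / of_nat d = of_int (2 * k) * pi" by simp
  then have "pi * (real_of_int n + of_int k * of_nat d) = 0" using assms by (simp add: field_simps)
  then have "real_of_int n + of_int k * of_nat d = 0" by simp
  moreover have "real_of_int (int d * (- k)) = - (of_int k * of_nat d)" by simp
  ultimately have "real_of_int n = real_of_int (int d * (- k))" by linarith
  then have "n = int d * (- k)" by (rule of_int_eq_iff[THEN iffD1])
  then show "int d dvd n" by simp
next
  assume "int d dvd n"
  then obtain c where "n = int d * c" by (rule dvdE)
  then show "omega d n = 1" by (simp add: omega_mult_self)
qed

lemma sum_omega: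
  assumes "d > 0"
  shows "(\<Sum>k<d. omega d (int k * n)) = (if int d dvd n then of_nat d else 0)"
proof (cases "int d dvd n")
  case True
  then have "omega d (int k * n) = 1" for k
    using omega_eq_1_iff[OF assms] by simp
  then show ?thesis using True by simp
next
  case False
  then have "omega d n \<noteq> 1" using omega_eq_1_iff[OF assms] by simp
  then have "(\<Sum>k<d. omega d n ^ k) = (omega d n ^ d - 1) / (omega d n - 1)"
    by (rule geometric_sum)
  also have "omega d n ^ d = 1" by (metis omega_int_mult omega_mult_self)
  finally show ?thesis using False by (simp add: omega_int_mult)
qed

definition dft_at :: "nat \<Rightarrow> (nat \<Rightarrow> complex) \<Rightarrow> int \<Rightarrow> complex" where
  "dft_at d x k = (\<Sum>j<d. x j * omega d (int j * k))"

lemma dft_eq_dft_at: "dft d x n = dft_at d x (int n)"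
  unfolding dft_def dft_at_def omega_def by (simp add: mult.assoc)

lemma dft_at_mod: "dft_at d x (k mod int d) = dft_at d x k"
proof -
  have "omega d (int j * (k mod int d)) = omega d (int j * k)" for j
  proof (rule omega_cong)
    have "int j * (k mod int d) - int j * k = int d * (- (int j * (k div int d)))"
      by (simp add: minus_div_mult_eq_mod[symmetric] algebra_simps)
    then show "int d dvd int j * (k mod int d) - int j * k" by simp
  qed
  then show ?thesis unfolding dft_at_def by simp
qed

lemma vidx_dft: "vidx d (dft d x) k = dft_at d x k"
proof (cases "d = 0")
  case False
  then have "int (nat (k mod int d)) = k mod int d" by simp
  then show ?thesis unfolding vidx_def dft_eq_dft_at by (simp add: dft_at_mod)
qed (simp add: vidx_def dft_def dft_at_def)

lemma shift_vconj_dft: "shift d p (vconj (dft d x)) n = cnj (dft_at d x (int n + p))"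
proof -
  have "shift d p (vconj (dft d x)) n = cnj (vidx d (dft d x) (int n + p))"
    by (simp add: shift_def vconj_def vidx_def)
  then show ?thesis by (simp add: vidx_dft)
qed

lemma cnj_dft_at: "cnj (dft_at d x k) = (\<Sum>l<d. cnj (x l) * omega d (- (int l * k)))"
  unfolding dft_at_def by (simp add: omega_uminus)

lemma dft_hadamard_shift_vconj:
  assumes "d > 0"
  shows "vidx d (dft d (hadamard (dft d x) (shift d p (vconj (dft d x))))) q
    = of_nat d * (\<Sum>j<d. \<Sum>l<d. if int d dvd int j - int l + q
        then x j * cnj (x l) * omega d (- (int l * p)) else 0)"
proof -
  have product: "hadamard (dft d x) (shift d p (vconj (dft d x))) k
      = (\<Sum>j<d. \<Sum>l<d. x j * cnj (x l) * (omega d (int j * int k) * omega d (- (int l * (int k + p)))))" for k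
  proof -
    have "hadamard (dft d x) (shift d p (vconj (dft d x))) k = dft_at d x (int k) * cnj (dft_at d x (int k + p))"
      by (simp add: hadamard_def shift_vconj_dft dft_eq_dft_at)
    also have "\<dots> = (\<Sum>j<d. x j * omega d (int j * int k)) * (\<Sum>l<d. cnj (x l) * omega d (- (int l * (int k + p))))"
      unfolding cnj_dft_at unfolding dft_at_def ..
    finally show ?thesis unfolding sum_product by (simp add: ac_simps)
  qed
  have phases: "omega d (int j * int k) * omega d (- (int l * (int k + p))) * omega d (int k * q)
      = omega d (- (int l * p)) * omega d (int k * (int j - int l + q))" for j k l
  proof -
    have "int j * int k + - (int l * (int k + p)) + int k * q = - (int l * p) + int k * (int j - int l + q)"
      by (simp add: algebra_simps)
    then show ?thesis by (simp only: omega_add[symmetric])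
  qed
  have "vidx d (dft d (hadamard (dft d x) (shift d p (vconj (dft d x))))) q
      = (\<Sum>k<d. \<Sum>j<d. \<Sum>l<d. x j * cnj (x l) *
          (omega d (int j * int k) * omega d (- (int l * (int k + p))) * omega d (int k * q)))"
    by (simp add: vidx_dft dft_at_def product sum_distrib_right mult.assoc)
  also have "\<dots> = (\<Sum>k<d. \<Sum>j<d. \<Sum>l<d. x j * cnj (x l) * omega d (- (int l * p)) * omega d (int k * (int j - int l + q)))"
    unfolding phases by (simp only: mult.assoc)
  also have "\<dots> = (\<Sum>j<d. \<Sum>l<d. x j * cnj (x l) * omega d (- (int l * p)) * (\<Sum>k<d. omega d (int k * (int j - int l + q))))"
    unfolding sum_distrib_left by (subst sum.swap) (rule sum.cong[OF refl], rule sum.swap)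
  also have "\<dots> = of_nat d * (\<Sum>j<d. \<Sum>l<d. if int d dvd int j - int l + q
        then x j * cnj (x l) * omega d (- (int l * p)) else 0)"
    unfolding sum_omega[OF assms] sum_distrib_left by (intro sum.cong refl) simp
  finally show ?thesis .
qed

definition twisted_autocorr :: "nat \<Rightarrow> nat \<Rightarrow> (nat \<Rightarrow> complex) \<Rightarrow> int \<Rightarrow> int \<Rightarrow> complex" where
  "twisted_autocorr d \<delta> x p q = (\<Sum>j<\<delta>. if 0 \<le> int j + q \<and> int j + q < int \<delta>
     then x j * cnj (x (nat (int j + q))) * omega d (- ((int j + q) * p)) else 0)"

lemma sum_if_int_eq:
  "(\<Sum>l<\<delta>. if int l = n then g l else 0)
     = (if 0 \<le> n \<and> n < int \<delta> then g (nat n) else (0 :: 'a :: comm_monoid_add))"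
proof (cases "0 \<le> n")
  case True
  then have "int l = n \<longleftrightarrow> l = nat n" for l by auto
  moreover have "nat n < \<delta> \<longleftrightarrow> n < int \<delta>" using True by linarith
  ultimately show ?thesis using True by (simp add: sum.delta)
next
  case False
  then have "int l \<noteq> n" for l by auto
  with False show ?thesis by simp
qed

text \<open>No aliasing: for \<open>j, l < \<delta>\<close> and \<open>|q| < \<delta>\<close> we have \<open>|j - l + q| \<le> 2\<delta> - 2 < d\<close>.\<close>
lemma dft_hadamard_shift_vconj_supported:
  assumes "2 * \<delta> - 1 \<le> d" and "supp d x \<subseteq> {0..<\<delta>}" and "\<bar>q\<bar> \<le> int \<delta> - 1"
  shows "vidx d (dft d (hadamard (dft d x) (shift d p (vconj (dft d x))))) q
    = of_nat d * twisted_autocorr d \<delta> x p q"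
proof -
  have "\<delta> \<le> d" "d > 0" using assms(1,3) by linarith+
  have vanish: "x j = 0" if "\<delta> \<le> j" "j < d" for j
    using assms(2) that unfolding supp_def by auto
  have no_alias: "int d dvd int j - int l + q \<longleftrightarrow> int l = int j + q" if "j < \<delta>" "l < \<delta>" for j l
  proof
    assume dvd: "int d dvd int j - int l + q"
    show "int l = int j + q"
    proof (rule ccontr)
      assume "int l \<noteq> int j + q"
      then have "int j - int l + q \<noteq> 0" by simp
      from dvd_imp_le_int[OF this dvd] have "int d \<le> \<bar>int j - int l + q\<bar>" by simp
      then show False using that assms(1,3) by linarith
    qed
  qed simp
  let ?t = "\<lambda>j l. if int d dvd int j - int l + q then x j * cnj (x l) * omega d (- (int l * p)) else 0"
  have "(\<Sum>j<d. \<Sum>l<d. ?t j l) = (\<Sum>j<\<delta>. \<Sum>l<d. ?t j l)"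
    by (rule sum.mono_neutral_right) (use \<open>\<delta> \<le> d\<close> vanish in \<open>auto intro!: sum.neutral\<close>)
  also have "\<dots> = (\<Sum>j<\<delta>. \<Sum>l<\<delta>. ?t j l)"
  proof (rule sum.cong[OF refl])
    fix j
    show "(\<Sum>l<d. ?t j l) = (\<Sum>l<\<delta>. ?t j l)"
      by (rule sum.mono_neutral_right) (use \<open>\<delta> \<le> d\<close> vanish in auto)
  qed
  also have "\<dots> = (\<Sum>j<\<delta>. \<Sum>l<\<delta>. if int l = int j + q then x j * cnj (x l) * omega d (- (int l * p)) else 0)"
    by (intro sum.cong refl) (use no_alias in \<open>simp only: lessThan_iff\<close>)
  also have "\<dots> = twisted_autocorr d \<delta> x p q"
    unfolding twisted_autocorr_def sum_if_int_eq by (intro sum.cong refl) auto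
  finally show ?thesis using dft_hadamard_shift_vconj[OF \<open>d > 0\<close>] by simp
qed

lemma sum_neq_0_if_dominant_term:
  fixes f :: "'a \<Rightarrow> 'b :: real_normed_vector"
  assumes "finite A" and "i \<in> A" and "(\<Sum>j\<in>A - {i}. norm (f j)) < norm (f i)"
  shows "(\<Sum>j\<in>A. f j) \<noteq> 0"
proof
  assume "(\<Sum>j\<in>A. f j) = 0"
  then have "f i = - (\<Sum>j\<in>A - {i}. f j)"
    using sum.remove[OF assms(1,2), of f] by (simp add: eq_neg_iff_add_eq_0)
  then have "norm (f i) \<le> (\<Sum>j\<in>A - {i}. norm (f j))"
    by (simp add: norm_sum)
  with assms(3) show False by linarith
qed

lemma antimono_on_interval_SucI:
  fixes b :: "nat \<Rightarrow> 'a :: order"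
  assumes step: "\<And>n. lo \<le> n \<Longrightarrow> Suc n < hi \<Longrightarrow> b (Suc n) \<le> b n"
    and "lo \<le> i" and "i \<le> j" and "j < hi"
  shows "b j \<le> b i"
  using assms(3,4)
proof (induction j rule: dec_induct)
  case (step n)
  have "b (Suc n) \<le> b n" using step.hyps step.prems assms(1,2) by simp
  then show ?case using step.IH step.prems by simp
qed simp

lemma antimono_product_le:
  fixes b :: "nat \<Rightarrow> real"
  assumes anti: "\<And>i j. 1 \<le> i \<Longrightarrow> i \<le> j \<Longrightarrow> j < \<delta> \<Longrightarrow> b j \<le> b i"
    and "b 1 \<le> b 0" and "\<And>j. 0 \<le> b j"
    and "1 \<le> j" and "1 \<le> l" and "j < \<delta>" and "l < \<delta>"
  shows "b j * b l \<le> b 1 * b (nat \<bar>int l - int j\<bar>)"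
proof -
  have ordered: "b i * b k \<le> b 1 * b (k - i)" if "1 \<le> i" "i \<le> k" "k < \<delta>" for i k
  proof -
    have "b k \<le> b (k - i)"
      using anti[of "k - i" k] anti[of 1 k] \<open>b 1 \<le> b 0\<close> that by (cases "k = i") auto
    then show ?thesis using anti[of 1 i] that assms(3) by (simp add: mult_mono)
  qed
  show ?thesis
  proof (cases "j \<le> l")
    case True
    then show ?thesis using ordered[of j l] assms(4-7) by (simp add: nat_diff_distrib')
  next
    case False
    then show ?thesis using ordered[of l j] assms(4-7) by (simp add: nat_diff_distrib' mult.commute)
  qed
qed

lemma twisted_autocorr_neq_0:
  fixes x :: "nat \<Rightarrow> complex"
  assumes dominant: "real (\<delta> - 1) * norm (x 1) < norm (x 0)"
    and anti: "\<And>i j. 1 \<le> i \<Longrightarrow> i \<le> j \<Longrightarrow> j < \<delta> \<Longrightarrow> norm (x j) \<le> norm (x i)"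
    and nonzero: "x (nat \<bar>q\<bar>) \<noteq> 0"
    and q_bound: "\<bar>q\<bar> \<le> int \<delta> - 1"
  shows "twisted_autocorr d \<delta> x p q \<noteq> 0"
proof -
  define f where "f j = (if 0 \<le> int j + q \<and> int j + q < int \<delta>
    then x j * cnj (x (nat (int j + q))) * omega d (- ((int j + q) * p)) else 0)" for j
  define r where "r = nat \<bar>q\<bar>"
  define j0 where "j0 = nat (- q)" \<comment> \<open>the index of the only term involving \<open>x 0\<close>\<close>
  have "j0 < \<delta>" using q_bound unfolding j0_def by linarith
  have f_norm: "norm (f j) = norm (x j) * norm (x (nat (int j + q)))"
    if "0 \<le> int j + q" "int j + q < int \<delta>" for j
    using that unfolding f_def by (simp add: norm_mult)
  have f_j0: "norm (f j0) = norm (x 0) * norm (x r)"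
    using f_norm[of j0] q_bound unfolding j0_def r_def by (cases "q \<ge> 0") (auto simp: mult.commute)
  have f_other: "norm (f j) \<le> norm (x 1) * norm (x r)" if "j < \<delta>" "j \<noteq> j0" for j
  proof (cases "0 \<le> int j + q \<and> int j + q < int \<delta>")
    case True
    define l where "l = nat (int j + q)"
    have "1 \<le> j" "1 \<le> l" "l < \<delta>" "nat \<bar>int l - int j\<bar> = r"
      using True that unfolding l_def j0_def r_def by auto
    moreover have "norm (x 1) \<le> norm (x 0)"
    proof -
      have "1 * norm (x 1) \<le> real (\<delta> - 1) * norm (x 1)"
        using \<open>1 \<le> j\<close> \<open>j < \<delta>\<close> by (intro mult_right_mono) auto
      then show ?thesis using dominant by linarith
    qed
    ultimately have "norm (x j) * norm (x l) \<le> norm (x 1) * norm (x r)"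
      using antimono_product_le[of \<delta> "\<lambda>j. norm (x j)" j l, OF anti] that by simp
    then show ?thesis using f_norm True unfolding l_def by simp
  next
    case False
    then have "f j = 0" unfolding f_def by (rule if_not_P)
    then show ?thesis by simp
  qed
  have "(\<Sum>j\<in>{..<\<delta>} - {j0}. norm (f j)) \<le> real (card ({..<\<delta>} - {j0})) * (norm (x 1) * norm (x r))"
    by (rule sum_bounded_above) (use f_other in auto)
  also have "\<dots> = real (\<delta> - 1) * norm (x 1) * norm (x r)"
    using \<open>j0 < \<delta>\<close> by simp
  also have "\<dots> < norm (f j0)"
    unfolding f_j0 using dominant nonzero unfolding r_def by (intro mult_strict_right_mono) auto
  finally have "(\<Sum>j<\<delta>. f j) \<noteq> 0"
    using sum_neq_0_if_dominant_term[of "{..<\<delta>}" j0 f] \<open>j0 < \<delta>\<close> by simp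
  then show ?thesis unfolding twisted_autocorr_def f_def .
qed

lemma mu2_pos:
  assumes "1 \<le> \<gamma>" and "1 \<le> \<delta>"
    and "\<And>p q. \<bar>q\<bar> \<le> int \<delta> - 1 \<Longrightarrow>
      vidx d (dft d (hadamard (dft d m) (shift d p (vconj (dft d m))))) q \<noteq> 0"
  shows "mu2 d \<gamma> \<delta> m > 0"
proof -
  let ?I = "{(p, q). \<bar>p\<bar> \<le> int \<gamma> - 1 \<and> \<bar>q\<bar> \<le> int \<delta> - 1}"
  have "finite ?I"
    by (rule finite_subset[of _ "{- int \<gamma>..int \<gamma>} \<times> {- int \<delta>..int \<delta>}"]) auto
  moreover have "(0, 0) \<in> ?I" using assms(1,2) by simp
  ultimately show ?thesis
    unfolding mu2_def using assms(3) by (subst Min_gr_iff) (auto intro!: exI[of _ "0 :: int"])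
qed

theorem mainTheorem9:
  fixes d \<delta> \<gamma> :: nat and m :: "nat \<Rightarrow> complex" and a \<theta> :: "nat \<Rightarrow> real"
  assumes "\<delta> \<ge> 1" and "2 * \<delta> - 1 \<le> d"
    and "supp d m \<subseteq> {0..<\<delta>}"
    and "\<And>j. j < \<delta> \<Longrightarrow> m j = complex_of_real (a j) * exp (\<i> * complex_of_real (\<theta> j))"
    and "1 \<le> \<gamma>" and "\<gamma> \<le> 2 * \<delta> - 1"
    and "\<bar>a 0\<bar> > real (\<delta> - 1) * \<bar>a 1\<bar>"
    and "\<And>j. 1 \<le> j \<Longrightarrow> j + 1 < \<delta> \<Longrightarrow> \<bar>a j\<bar> \<ge> \<bar>a (j + 1)\<bar>"
    and "\<bar>a (\<delta> - 1)\<bar> > 0"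
  shows "mu2 d \<gamma> \<delta> m > 0"
proof -
  have norm_m: "norm (m j) = \<bar>a j\<bar>" if "j < \<delta>" for j
    using assms(4)[OF that] by (simp add: norm_mult)
  have anti: "norm (m j) \<le> norm (m i)" if "1 \<le> i" "i \<le> j" "j < \<delta>" for i j
    using antimono_on_interval_SucI[of 1 \<delta> "\<lambda>j. \<bar>a j\<bar>" i j] assms(8) norm_m that by simp
  have dominant: "real (\<delta> - 1) * norm (m 1) < norm (m 0)"
    using assms(1,7) norm_m by (cases "\<delta> = 1") auto
  have nonzero: "m j \<noteq> 0" if "j < \<delta>" for j
  proof -
    have "0 \<le> real (\<delta> - 1) * norm (m 1)" by simp
    then have "0 < norm (m 0)" using dominant by linarith
    moreover have "0 < norm (m j)" if "1 \<le> j"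
    proof -
      have "norm (m (\<delta> - 1)) \<le> norm (m j)" using anti[OF that] \<open>j < \<delta>\<close> by simp
      then show ?thesis using assms(9) norm_m[of "\<delta> - 1"] assms(1) by linarith
    qed
    ultimately show ?thesis by (cases "j = 0") auto
  qed
  show ?thesis
  proof (rule mu2_pos[OF assms(5,1)])
    fix p q
    assume q_bound: "\<bar>q\<bar> \<le> int \<delta> - 1"
    then have "nat \<bar>q\<bar> < \<delta>" and "d > 0" using assms(2) by linarith+
    with q_bound show "vidx d (dft d (hadamard (dft d m) (shift d p (vconj (dft d m))))) q \<noteq> 0"
      using dft_hadamard_shift_vconj_supported[OF assms(2,3)] twisted_autocorr_neq_0[OF dominant anti nonzero]
      by simp
  qed
qed

end
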